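(* Let $\mathbf H_\Lambda(0)$ and $\mathbf H_\Lambda(1)$ be quadratic and strictly positive Hamiltonians on $\mathcal F(\mathbb C^L)$, with associated real skew-symmetric matrices $A_\Lambda(0)$, $A_\Lambda(1)$. Then $j(\mathbf H_\Lambda(0))=j(\mathbf H_\Lambda(1))$ if and only if $\mathrm{Sf}_2(A_\Lambda(0),A_\Lambda(1))=1$.
   Context: $\mathcal F(\mathbb C^L)$ is the fermionic Fock space over $\Lambda=\{1,\dots,L\}$ with creation/annihilation operators ${\mathfrak a}_j^*,{\mathfrak a}_j$ satisfying the CAR. Fix $\theta\in\mathbb R$ and define Majorana operators ${\mathfrak b}_{2j-1}=e^{i\theta/2}{\mathfrak a}_j+e^{-i\theta/2}{\mathfrak a}_j^*$, ${\mathfrak b}_{2j}=-ie^{i\theta/2}{\mathfrak a}_j+ie^{-i\theta/2}{\mathfrak a}_j^*$, and the column vector ${\mathfrak b}=({\mathfrak b}_1,{\mathfrak b}_3,\dots,{\mathfrak b}_{2L-1},{\mathfrak b}_2,{\mathfrak b}_4,\dots,{\mathfrak b}_{2L})^t$. A quadratic Hamiltonian $\mathbf H_\Lambda=\sum_{j,k}h_{jk}{\mathfrak a}_j^*{\mathfrak a}_k+\tilde h_{jk}{\mathfrak a}_j{\mathfrak a}_k+\text{adjoint}$ can be written (up to an additive constant) as $\mathbf H_\Lambda=\frac i2{\mathfrak b}^tA_\Lambda{\mathfrak b}$ with a unique real skew-symmetric $2L\times2L$ matrix $A_\Lambda$. It is strictly positive if $A_\Lambda$ is invertible (equivalently, all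 single-particle energies $E_j$ in the normal form $VA_\Lambda V^*=\begin{pmatrix}0&E\\-E&0\end{pmatrix}$, $V$ orthogonal, $E=\mathrm{diag}(E_1,\dots,E_L)\ge0$, are strictly positive). Kitaev index: $j(\mathbf H_\Lambda)=\mathrm{sgn}\,\mathrm{Pf}(A_\Lambda)$. Finite-dimensional $\mathbb Z_2$-valued spectral flow: for invertible real skew-symmetric matrices $T_0,T_1$, choose an invertible real $M$ with $T_1=MT_0M^*$ and set $\mathrm{Sf}_2(T_0,T_1)=\mathrm{sgn}\det(M)$. *)

theory Defs
  imports "Jordan_Normal_Form.Determinant"
begin

definition skew_symmetric_mat :: "nat \<Rightarrow> real mat \<Rightarrow> bool" where
  "skew_symmetric_mat n A \<longleftrightarrow> A \<in> carrier_mat n n \<and> transpose_mat A = - A"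

definition pfaffian :: "nat \<Rightarrow> real mat \<Rightarrow> real" where
  "pfaffian L A = (\<Sum>\<sigma> \<in> {p. p permutes {0..<2*L}}.
      signof \<sigma> * (\<Prod>i<L. A $$ (\<sigma> (2*i), \<sigma> (2*i+1)))) / (2 ^ L * fact L)"

text \<open>Kitaev index of the quadratic Hamiltonian with associated matrix A on F(C^L):
  j = sgn Pf(A).\<close>
definition kitaev_index :: "nat \<Rightarrow> real mat \<Rightarrow> real" where
  "kitaev_index L A = sgn (pfaffian L A)"

definition spectral_flow2 :: "nat \<Rightarrow> real mat \<Rightarrow> real mat \<Rightarrow> real" where
  "spectral_flow2 n T0 T1 = sgn (det (SOME M. M \<in> carrier_mat n n \<and> invertible_mat M
      \<and> T1 = M * T0 * transpose_mat M))"

end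

(* Congruence A \<mapsto> B A B^T multiplies the Pfaffian by det B. Clearing two rows and columns
   at a time by congruences (a swap, a rescaling and an elimination step) shows that every
   invertible real skew-symmetric matrix is congruent to the standard symplectic matrix J, and
   Pf J > 0 because every nonvanishing term of its defining sum equals 1. Hence Pf A0 \<noteq> 0, A0 and
   A1 are congruent, and every M with A1 = M A0 M^T satisfies sgn Pf A1 = sgn det M * sgn Pf A0:
   the Kitaev indices agree exactly when sgn det M = 1, whichever such M the spectral flow picks. *)

theory Submission
  imports Defs
begin

lemma invertible_mat_iff_det:
  fixes A :: "'a::field mat"
  assumes A: "A \<in> carrier_mat n n"
  shows "invertible_mat A \<longleftrightarrow> det A \<noteq> 0"
proof
  assume "invertible_mat A"
  then obtain B where AB: "A * B = 1\<^sub>m n" and BA: "B * A = 1\<^sub>m (dim_row B)"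
    using A unfolding invertible_mat_def inverts_mat_def by auto
  then have "B \<in> carrier_mat n n"
    using A by (metis carrier_matD(2) carrier_matI index_mult_mat(3) index_one_mat(3))
  with AB A show "det A \<noteq> 0"
    by (metis det_mult det_one mult_zero_left zero_neq_one)
next
  assume "det A \<noteq> 0"
  from det_non_zero_imp_unit[OF A this, of undefined]
  obtain B where "B \<in> carrier_mat n n" "B * A = 1\<^sub>m n" "A * B = 1\<^sub>m n"
    unfolding Units_def ring_mat_def by auto
  with A show "invertible_mat A"
    unfolding invertible_mat_def inverts_mat_def by auto
qed

lemma skew_symmetric_mat_carrier: "skew_symmetric_mat n A \<Longrightarrow> A \<in> carrier_mat n n"
  unfolding skew_symmetric_mat_def by blast

lemma skew_symmetric_mat_index:
  assumes A: "skew_symmetric_mat n A" and "i < n" "j < n"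
  shows "A $$ (j, i) = - A $$ (i, j)"
proof -
  have "A $$ (j, i) = transpose_mat A $$ (i, j)"
    using assms skew_symmetric_mat_carrier[OF A] by auto
  also have "\<dots> = - A $$ (i, j)"
    using assms unfolding skew_symmetric_mat_def by auto
  finally show ?thesis .
qed

lemma skew_symmetric_mat_diag:
  "skew_symmetric_mat n A \<Longrightarrow> i < n \<Longrightarrow> A $$ (i, i) = 0"
  using skew_symmetric_mat_index[of n A i i] by simp

subsection \<open>Congruence of matrices\<close>

definition congruent_mat :: "nat \<Rightarrow> 'a::field mat \<Rightarrow> 'a mat \<Rightarrow> bool" where
  "congruent_mat n A B \<longleftrightarrow>
     (\<exists>M \<in> carrier_mat n n. invertible_mat M \<and> B = M * A * transpose_mat M)"

lemma congruent_matI: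
  fixes A M :: "'a::field mat"
  assumes "M \<in> carrier_mat n n" "det M \<noteq> 0"
  shows "congruent_mat n A (M * A * transpose_mat M)"
  using assms invertible_mat_iff_det unfolding congruent_mat_def by blast

lemma congruent_matE:
  fixes A B :: "'a::field mat"
  assumes "congruent_mat n A B"
  obtains M where "M \<in> carrier_mat n n" "det M \<noteq> 0" "B = M * A * transpose_mat M"
  using assms invertible_mat_iff_det unfolding congruent_mat_def by blast

lemma congruent_mat_refl: "A \<in> carrier_mat n n \<Longrightarrow> congruent_mat n A (A :: 'a::field mat)"
  using congruent_matI[of "1\<^sub>m n" n A] by simp

lemma congruence_index:
  assumes "A \<in> carrier_mat n n" "N \<in> carrier_mat n n" "i < n" "j < n"
  shows "(N * A * transpose_mat N) $$ (i, j) =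
    (\<Sum>a<n. \<Sum>b<n. N $$ (i, a) * A $$ (a, b) * N $$ (j, b))"
  using assms
  by (simp add: scalar_prod_def atLeast0LessThan sum_distrib_left sum_distrib_right mult.assoc)

lemma congruence_compose:
  fixes A N1 N2 :: "'a::comm_ring_1 mat"
  assumes A: "A \<in> carrier_mat n n" and N1: "N1 \<in> carrier_mat n n" and N2: "N2 \<in> carrier_mat n n"
  shows "N2 * (N1 * A * transpose_mat N1) * transpose_mat N2 = (N2 * N1) * A * transpose_mat (N2 * N1)"
  using assms by (simp add: transpose_mult[OF N2 N1] assoc_mult_mat[of _ n n _ n _ n])

lemma congruent_mat_carrier:
  "A \<in> carrier_mat n n \<Longrightarrow> congruent_mat n A B \<Longrightarrow> B \<in> carrier_mat n n"
  by (auto elim: congruent_matE)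

lemma congruent_mat_det:
  fixes A B :: "'a::field mat"
  assumes A: "A \<in> carrier_mat n n" and "congruent_mat n A B" and "det A \<noteq> 0"
  shows "det B \<noteq> 0"
  using assms(2) by (elim congruent_matE) (use assms in \<open>simp add: det_mult det_transpose\<close>)

lemma congruent_mat_trans:
  fixes A B C :: "'a::field mat"
  assumes A: "A \<in> carrier_mat n n" and AB: "congruent_mat n A B" and BC: "congruent_mat n B C"
  shows "congruent_mat n A C"
proof -
  obtain M where M: "M \<in> carrier_mat n n" "det M \<noteq> 0" "B = M * A * transpose_mat M"
    using AB by (rule congruent_matE)
  obtain N where N: "N \<in> carrier_mat n n" "det N \<noteq> 0" "C = N * B * transpose_mat N"
    using BC by (rule congruent_matE)
  have "C = (N * M) * A * transpose_mat (N * M)"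
    using congruence_compose[OF A M(1) N(1)] M(3) N(3) by simp
  moreover have "det (N * M) \<noteq> 0" using M N by (simp add: det_mult)
  ultimately show ?thesis using congruent_matI[of "N * M" n A] M(1) N(1) by simp
qed

lemma congruent_mat_sym:
  fixes A B :: "'a::field mat"
  assumes A: "A \<in> carrier_mat n n" and AB: "congruent_mat n A B"
  shows "congruent_mat n B A"
proof -
  obtain M where M: "M \<in> carrier_mat n n" "det M \<noteq> 0" "B = M * A * transpose_mat M"
    using AB by (rule congruent_matE)
  obtain M' where M': "M' \<in> carrier_mat n n" "M' * M = 1\<^sub>m n"
    using det_non_zero_imp_unit[OF M(1,2), of undefined] unfolding Units_def ring_mat_def by auto
  have "M' * B * transpose_mat M' = A"
    using congruence_compose[OF A M(1) M'(1)] M(3) M'(2) A by simp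
  moreover have "det M' \<noteq> 0"
    using arg_cong[OF M'(2), of det] by (auto simp: det_mult[OF M'(1) M(1)])
  ultimately show ?thesis using congruent_matI[OF M'(1)] by metis
qed

lemma congruent_mat_skew_symmetric:
  assumes A: "skew_symmetric_mat n A" and AB: "congruent_mat n A B"
  shows "skew_symmetric_mat n B"
proof -
  obtain M where M: "M \<in> carrier_mat n n" "B = M * A * transpose_mat M"
    using AB by (rule congruent_matE)
  have Ac: "A \<in> carrier_mat n n" and At: "transpose_mat A = - A"
    using A unfolding skew_symmetric_mat_def by auto
  have "transpose_mat B = M * transpose_mat A * transpose_mat M"
    using M Ac by (simp add: transpose_mult[of _ n n _ n] assoc_mult_mat[of _ n n _ n _ n])
  also have "\<dots> = - B"
    using M Ac by (simp add: At)
  finally show ?thesis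
    using M Ac unfolding skew_symmetric_mat_def by simp
qed

lemma congruence_index_monomial:
  assumes A: "A \<in> carrier_mat n n" and N: "N \<in> carrier_mat n n"
    and N_index: "\<And>i a. i < n \<Longrightarrow> a < n \<Longrightarrow> N $$ (i, a) = (if a = \<phi> i then c i else 0)"
    and \<phi>: "\<And>i. i < n \<Longrightarrow> \<phi> i < n" and "i < n" "j < n"
  shows "(N * A * transpose_mat N) $$ (i, j) = c i * A $$ (\<phi> i, \<phi> j) * c j"
proof -
  have "(N * A * transpose_mat N) $$ (i, j) =
      (\<Sum>a<n. \<Sum>b<n. (if a = \<phi> i then c i else 0) * A $$ (a, b) * (if b = \<phi> j then c j else 0))"
    unfolding congruence_index[OF A N \<open>i < n\<close> \<open>j < n\<close>]
    using \<open>i < n\<close> \<open>j < n\<close> by (intro sum.cong refl) (simp add: N_index)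
  also have "\<dots> = c i * A $$ (\<phi> i, \<phi> j) * c j"
  proof -
    have "\<And>a b. (if a = \<phi> i then c i else 0) * A $$ (a, b) * (if b = \<phi> j then c j else 0) =
        (if b = \<phi> j then (if a = \<phi> i then c i * A $$ (a, b) * c j else 0) else 0)"
      by simp
    then show ?thesis
      using \<phi> \<open>i < n\<close> \<open>j < n\<close> by (simp only: sum.delta[OF finite_lessThan] lessThan_iff if_True)
  qed
  finally show ?thesis .
qed

subsection \<open>The Pfaffian under congruence\<close>

lemma prod_lessThan_double:
  fixes g :: "nat \<Rightarrow> 'a::comm_monoid_mult"
  shows "(\<Prod>k<2*L. g k) = (\<Prod>i<L. g (2*i) * g (2*i+1))"
  by (induction L) (simp_all add: mult.assoc)

lemma bij_betw_PiE_pairs: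
  fixes L :: nat
  shows "bij_betw (\<lambda>f. restrict (\<lambda>i. (f (2*i), f (2*i+1))) {..<L})
     (PiE {..<2*L} (\<lambda>_. S)) (PiE {..<L} (\<lambda>_. S \<times> S))"
proof (rule bij_betw_byWitness[where
      f' = "\<lambda>p. restrict (\<lambda>k. (if even k then fst else snd) (p (k div 2))) {..<2*L}"])
  show "\<forall>f \<in> PiE {..<2*L} (\<lambda>_. S). restrict (\<lambda>k. (if even k then fst else snd)
      (restrict (\<lambda>i. (f (2*i), f (2*i+1))) {..<L} (k div 2))) {..<2*L} = f"
  proof (intro ballI ext)
    fix f k assume f: "f \<in> PiE {..<2*L} (\<lambda>_. S)"
    show "restrict (\<lambda>k. (if even k then fst else snd)
        (restrict (\<lambda>i. (f (2*i), f (2*i+1))) {..<L} (k div 2))) {..<2*L} k = f k"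
    proof (cases "k < 2*L")
      case True
      then show ?thesis by (cases "even k") (auto elim!: evenE oddE)
    next
      case False
      then show ?thesis using f by (auto simp: PiE_def extensional_def)
    qed
  qed
  show "\<forall>p \<in> PiE {..<L} (\<lambda>_. S \<times> S). restrict (\<lambda>i.
      (restrict (\<lambda>k. (if even k then fst else snd) (p (k div 2))) {..<2*L} (2*i),
       restrict (\<lambda>k. (if even k then fst else snd) (p (k div 2))) {..<2*L} (2*i+1))) {..<L} = p"
  proof (intro ballI ext)
    fix p i assume "p \<in> PiE {..<L} (\<lambda>_. S \<times> S)"
    then show "restrict (\<lambda>i.
        (restrict (\<lambda>k. (if even k then fst else snd) (p (k div 2))) {..<2*L} (2*i),
         restrict (\<lambda>k. (if even k then fst else snd) (p (k div 2))) {..<2*L} (2*i+1))) {..<L} i = p i"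
      by (cases "i < L") (auto simp: PiE_def extensional_def)
  qed
  show "(\<lambda>f. restrict (\<lambda>i. (f (2*i), f (2*i+1))) {..<L}) ` PiE {..<2*L} (\<lambda>_. S)
      \<subseteq> PiE {..<L} (\<lambda>_. S \<times> S)"
    by (auto simp: PiE_def Pi_def)
  show "(\<lambda>p. restrict (\<lambda>k. (if even k then fst else snd) (p (k div 2))) {..<2*L}) `
      PiE {..<L} (\<lambda>_. S \<times> S) \<subseteq> PiE {..<2*L} (\<lambda>_. S)"
  proof (rule image_subsetI)
    fix p assume "p \<in> PiE {..<L} (\<lambda>_. S \<times> S)"
    then show "restrict (\<lambda>k. (if even k then fst else snd) (p (k div 2))) {..<2*L} \<in> PiE {..<2*L} (\<lambda>_. S)"
      by (auto simp: restrict_PiE_iff PiE_iff mem_Times_iff)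
  qed
qed

lemma prod_sum_sum_PiE:
  fixes G :: "nat \<Rightarrow> 'b \<Rightarrow> 'b \<Rightarrow> 'a::comm_semiring_1"
  assumes S: "finite S"
  shows "(\<Prod>i<L. \<Sum>a\<in>S. \<Sum>b\<in>S. G i a b) =
    (\<Sum>f \<in> PiE {..<2*L} (\<lambda>_. S). \<Prod>i<L. G i (f (2*i)) (f (2*i+1)))"
proof -
  have "(\<Prod>i<L. \<Sum>a\<in>S. \<Sum>b\<in>S. G i a b) = (\<Prod>i<L. \<Sum>q\<in>S \<times> S. G i (fst q) (snd q))"
    by (simp add: sum.cartesian_product split_def)
  also have "\<dots> = (\<Sum>p \<in> PiE {..<L} (\<lambda>_. S \<times> S). \<Prod>i<L. G i (fst (p i)) (snd (p i)))"
    using S by (intro prod_sum_PiE) auto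
  also have "\<dots> = (\<Sum>f \<in> PiE {..<2*L} (\<lambda>_. S).
      \<Prod>i<L. G i (fst (restrict (\<lambda>i. (f (2*i), f (2*i+1))) {..<L} i))
                 (snd (restrict (\<lambda>i. (f (2*i), f (2*i+1))) {..<L} i)))"
    by (rule sum.reindex_bij_betw[OF bij_betw_PiE_pairs, symmetric])
  also have "\<dots> = (\<Sum>f \<in> PiE {..<2*L} (\<lambda>_. S). \<Prod>i<L. G i (f (2*i)) (f (2*i+1)))"
    by (intro sum.cong prod.cong) auto
  finally show ?thesis .
qed

lemma permutes_extend_id:
  fixes f :: "nat \<Rightarrow> nat"
  assumes "inj_on f {0..<n}" "f ` {0..<n} \<subseteq> {0..<n}"
  shows "(\<lambda>k. if k < n then f k else k) permutes {0..<n}"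
proof -
  have "bij_betw f {0..<n} {0..<n}"
    using assms endo_inj_surj[OF _ assms(2,1)] by (simp add: bij_betw_def)
  from permutes_restrict_id[OF this] show ?thesis unfolding restrict_id_def by simp
qed

lemma leibniz_sum_select_columns:
  fixes B :: "'a::comm_ring_1 mat"
  assumes B: "B \<in> carrier_mat n n" and f: "f \<in> {..<n} \<rightarrow> {..<n}"
  shows "(\<Sum>\<sigma> | \<sigma> permutes {0..<n}. signof \<sigma> * (\<Prod>k<n. B $$ (\<sigma> k, f k)))
    = (if inj_on f {..<n} then signof (\<lambda>k. if k < n then f k else k) * det B else 0)"
proof -
  have fn: "\<And>k. k < n \<Longrightarrow> f k < n" using f by auto
  define R where "R = mat n n (\<lambda>(i, j). transpose_mat B $$ (f i, j))"
  have R: "R \<in> carrier_mat n n" unfolding R_def by simp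
  have "det R = (\<Sum>\<sigma> | \<sigma> permutes {0..<n}. signof \<sigma> * (\<Prod>k<n. B $$ (\<sigma> k, f k)))"
    unfolding det_def'[OF R]
  proof (rule sum.cong[OF refl])
    fix \<sigma> assume "\<sigma> \<in> {\<sigma>. \<sigma> permutes {0..<n}}"
    then have "\<And>i. i < n \<Longrightarrow> \<sigma> i < n" by (auto dest: permutes_in_image)
    then show "signof \<sigma> * (\<Prod>i = 0..<n. R $$ (i, \<sigma> i)) = signof \<sigma> * (\<Prod>k<n. B $$ (\<sigma> k, f k))"
      unfolding atLeast0LessThan using fn B by (auto simp: R_def intro!: prod.cong)
  qed
  moreover have "det R = (if inj_on f {..<n} then signof (\<lambda>k. if k < n then f k else k) * det B else 0)"
  proof (cases "inj_on f {..<n}")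
    case True
    let ?t = "\<lambda>k. if k < n then f k else k"
    have t: "?t permutes {0..<n}"
      using True fn by (intro permutes_extend_id) (auto simp: atLeast0LessThan)
    have "R = mat n n (\<lambda>(i, j). transpose_mat B $$ (?t i, j))"
      unfolding R_def by (rule eq_matI) auto
    then have "det R = signof ?t * det B"
      using det_permute_rows[OF _ t, of "transpose_mat B"] B by (simp add: det_transpose)
    then show ?thesis using True by simp
  next
    case False
    then obtain i j where ij: "i < n" "j < n" "i \<noteq> j" "f i = f j"
      unfolding inj_on_def by auto
    have "row R i = row R j" using ij fn B by (auto simp: R_def)
    then show ?thesis using det_identical_rows[OF R ij(3,1,2)] False by simp
  qed
  ultimately show ?thesis by simp
qed

lemma sum_inj_PiE_eq_sum_permutes:
  fixes n :: nat
  shows "(\<Sum>f \<in> {f \<in> PiE {..<n} (\<lambda>_. {..<n}). inj_on f {..<n}}. g (\<lambda>k. if k < n then f k else k)) =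
   (\<Sum>\<tau> | \<tau> permutes {0..<n}. g \<tau>)"
proof (rule sum.reindex_bij_witness[where i = "\<lambda>\<tau>. restrict \<tau> {..<n}" and j = "\<lambda>f k. if k < n then f k else k"])
  fix f assume f: "f \<in> {f \<in> PiE {..<n} (\<lambda>_. {..<n}). inj_on f {..<n}}"
  then show "restrict (\<lambda>k. if k < n then f k else k) {..<n} = f"
    by (auto simp: PiE_def extensional_def)
  have "(\<lambda>k. if k < n then f k else k) permutes {0..<n}"
    by (rule permutes_extend_id) (use f in \<open>auto simp: atLeast0LessThan\<close>)
  then show "(\<lambda>k. if k < n then f k else k) \<in> {\<tau>. \<tau> permutes {0..<n}}" by simp
next
  fix \<tau> assume \<tau>: "\<tau> \<in> {\<tau>. \<tau> permutes {0..<n}}"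
  then show "(\<lambda>k. if k < n then restrict \<tau> {..<n} k else k) = \<tau>"
    by (auto simp: fun_eq_iff permutes_def)
  have "inj_on \<tau> {..<n}"
    using \<tau> by (auto intro: inj_on_subset[OF permutes_inj])
  then show "restrict \<tau> {..<n} \<in> {f \<in> PiE {..<n} (\<lambda>_. {..<n}). inj_on f {..<n}}"
    using \<tau> by (auto simp: inj_on_def dest: permutes_in_image)
qed simp

lemma prod_congruence_pairs:
  fixes A B :: "'a::comm_ring_1 mat"
  assumes A: "A \<in> carrier_mat (2*L) (2*L)" and B: "B \<in> carrier_mat (2*L) (2*L)"
    and \<sigma>: "\<And>k. k < 2*L \<Longrightarrow> \<sigma> k < 2*L"
  shows "(\<Prod>i<L. (B * A * transpose_mat B) $$ (\<sigma> (2*i), \<sigma> (2*i+1))) =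
    (\<Sum>f \<in> PiE {..<2*L} (\<lambda>_. {..<2*L}).
       (\<Prod>i<L. A $$ (f (2*i), f (2*i+1))) * (\<Prod>k<2*L. B $$ (\<sigma> k, f k)))"
proof -
  have "(\<Prod>i<L. (B * A * transpose_mat B) $$ (\<sigma> (2*i), \<sigma> (2*i+1))) =
      (\<Prod>i<L. \<Sum>a<2*L. \<Sum>b<2*L. B $$ (\<sigma> (2*i), a) * A $$ (a, b) * B $$ (\<sigma> (2*i+1), b))"
    by (intro prod.cong refl congruence_index[OF A B] \<sigma>) auto
  also have "\<dots> = (\<Sum>f \<in> PiE {..<2*L} (\<lambda>_. {..<2*L}). \<Prod>i<L.
      B $$ (\<sigma> (2*i), f (2*i)) * A $$ (f (2*i), f (2*i+1)) * B $$ (\<sigma> (2*i+1), f (2*i+1)))"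
    by (rule prod_sum_sum_PiE[where G = "\<lambda>i a b. B $$ (\<sigma> (2*i), a) * A $$ (a, b) * B $$ (\<sigma> (2*i+1), b)"])
       simp
  also have "\<dots> = (\<Sum>f \<in> PiE {..<2*L} (\<lambda>_. {..<2*L}).
      (\<Prod>i<L. A $$ (f (2*i), f (2*i+1))) * (\<Prod>k<2*L. B $$ (\<sigma> k, f k)))"
    unfolding prod_lessThan_double by (simp add: prod.distrib[symmetric] ac_simps)
  finally show ?thesis .
qed

lemma pfaffian_congruence:
  assumes A: "A \<in> carrier_mat (2*L) (2*L)" and B: "B \<in> carrier_mat (2*L) (2*L)"
  shows "pfaffian L (B * A * transpose_mat B) = det B * pfaffian L A"
proof -
  define n where "n = 2*L"
  define F where "F = PiE {..<n} (\<lambda>_. {..<n})"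
  define X where "X = (\<lambda>f. \<Prod>i<L. A $$ (f (2*i), f (2*i+1)))"
  let ?P = "{\<sigma>. \<sigma> permutes {0..<n}}"
  let ?ext = "\<lambda>f k. if k < n then f k else k"
  have "(\<Sum>\<sigma>\<in>?P. signof \<sigma> * (\<Prod>i<L. (B * A * transpose_mat B) $$ (\<sigma> (2*i), \<sigma> (2*i+1))))
      = (\<Sum>\<sigma>\<in>?P. signof \<sigma> * (\<Sum>f\<in>F. X f * (\<Prod>k<n. B $$ (\<sigma> k, f k))))"
  proof (rule sum.cong[OF refl])
    fix \<sigma> assume "\<sigma> \<in> ?P"
    then have "\<And>k. k < 2*L \<Longrightarrow> \<sigma> k < 2*L" by (auto simp: n_def dest: permutes_in_image)
    then show "signof \<sigma> * (\<Prod>i<L. (B * A * transpose_mat B) $$ (\<sigma> (2*i), \<sigma> (2*i+1))) =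
        signof \<sigma> * (\<Sum>f\<in>F. X f * (\<Prod>k<n. B $$ (\<sigma> k, f k)))"
      unfolding F_def X_def n_def by (simp only: prod_congruence_pairs[OF A B])
  qed
  also have "\<dots> = (\<Sum>f\<in>F. X f * (\<Sum>\<sigma>\<in>?P. signof \<sigma> * (\<Prod>k<n. B $$ (\<sigma> k, f k))))"
    by (simp add: sum_distrib_left sum.swap[of _ ?P] ac_simps)
  also have "\<dots> = (\<Sum>f\<in>F. if inj_on f {..<n} then X (?ext f) * signof (?ext f) * det B else 0)"
  proof (rule sum.cong[OF refl])
    fix f assume "f \<in> F"
    then have "f \<in> {..<n} \<rightarrow> {..<n}" by (simp add: F_def PiE_iff)
    moreover have "X (?ext f) = X f"
      unfolding X_def n_def by (rule prod.cong) auto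
    ultimately show "X f * (\<Sum>\<sigma>\<in>?P. signof \<sigma> * (\<Prod>k<n. B $$ (\<sigma> k, f k))) =
        (if inj_on f {..<n} then X (?ext f) * signof (?ext f) * det B else 0)"
      using B by (simp add: leibniz_sum_select_columns n_def)
  qed
  also have "\<dots> = (\<Sum>f \<in> {f\<in>F. inj_on f {..<n}}. X (?ext f) * signof (?ext f) * det B)"
    by (rule sum.inter_filter[symmetric]) (simp add: F_def finite_PiE)
  also have "\<dots> = (\<Sum>\<tau>\<in>?P. X \<tau> * signof \<tau> * det B)"
    unfolding F_def by (rule sum_inj_PiE_eq_sum_permutes)
  also have "\<dots> = det B * (\<Sum>\<tau>\<in>?P. signof \<tau> * X \<tau>)"
    by (simp add: sum_distrib_left ac_simps)
  finally show ?thesis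
    unfolding pfaffian_def X_def n_def by simp
qed

subsection \<open>The standard symplectic matrix\<close>

definition std_symplectic :: "nat \<Rightarrow> real mat" where
  "std_symplectic n = mat n n (\<lambda>(i, j).
     if even i \<and> j = i + 1 then 1 else if odd i \<and> i = j + 1 then -1 else 0)"

lemma index_std_symplectic:
  "i < n \<Longrightarrow> j < n \<Longrightarrow> std_symplectic n $$ (i, j) =
     (if even i \<and> j = i + 1 then 1 else if odd i \<and> i = j + 1 then -1 else 0)"
  "dim_row (std_symplectic n) = n" "dim_col (std_symplectic n) = n"
  unfolding std_symplectic_def by auto

lemma std_symplectic_skew_symmetric: "skew_symmetric_mat n (std_symplectic n)"
  unfolding skew_symmetric_mat_def
  by (auto simp: index_std_symplectic carrier_matI)

lemma std_symplectic_off_block: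
  assumes "i < 2*k" "2*k \<le> j" "j < n"
  shows "std_symplectic n $$ (i, j) = 0" "std_symplectic n $$ (j, i) = 0"
  using assms by (auto simp: index_std_symplectic elim!: evenE oddE)

lemma split_pair_index:
  fixes k :: nat
  obtains i r where "k = 2*i + r" "r < 2"
  by (metis div_mult_mod_eq mod_less_divisor mult.commute zero_less_numeral)

definition lift_to_pairs :: "nat \<Rightarrow> (nat \<Rightarrow> nat) \<Rightarrow> nat \<Rightarrow> nat" where
  "lift_to_pairs L \<pi> = (\<lambda>k. if k < 2*L then 2 * \<pi> (k div 2) + k mod 2 else k)"

definition swap_within_pairs :: "nat \<Rightarrow> nat set \<Rightarrow> nat \<Rightarrow> nat" where
  "swap_within_pairs L S = (\<lambda>k. if k < 2*L \<and> k div 2 \<in> S then (if even k then k + 1 else k - 1) else k)"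

lemma lift_to_pairs_apply:
  "r < 2 \<Longrightarrow> i < L \<Longrightarrow> lift_to_pairs L \<pi> (2*i + r) = 2 * \<pi> i + r"
  unfolding less_2_cases_iff lift_to_pairs_def by auto

lemma swap_within_pairs_apply:
  "r < 2 \<Longrightarrow> i < L \<Longrightarrow> swap_within_pairs L S (2*i + r) = 2*i + (if i \<in> S then 1 - r else r)"
  unfolding less_2_cases_iff swap_within_pairs_def by auto

lemma lift_to_pairs_transpose:
  assumes "a < L" "b < L" "\<pi> permutes {0..<L}"
  shows "lift_to_pairs L (transpose a b \<circ> \<pi>) =
    transpose (2*a) (2*b) \<circ> transpose (2*a+1) (2*b+1) \<circ> lift_to_pairs L \<pi>"
proof
  fix k
  show "lift_to_pairs L (transpose a b \<circ> \<pi>) k =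
      (transpose (2*a) (2*b) \<circ> transpose (2*a+1) (2*b+1) \<circ> lift_to_pairs L \<pi>) k"
  proof (cases "k < 2*L")
    case True
    obtain i r where k: "k = 2*i + r" and r: "r < 2" by (rule split_pair_index)
    with True have "i < L" by simp
    with r show ?thesis
      unfolding k lift_to_pairs_apply[OF r \<open>i < L\<close>] o_apply
      unfolding less_2_cases_iff by (auto simp: transpose_def)
  next
    case False
    then show ?thesis using assms by (auto simp: lift_to_pairs_def transpose_def)
  qed
qed

lemma lift_to_pairs_permutes_sign:
  assumes "\<pi> permutes {0..<L}"
  shows "lift_to_pairs L \<pi> permutes {0..<2*L} \<and> sign (lift_to_pairs L \<pi>) = 1"
  using assms finite_atLeastLessThan
proof (induction rule: permutes_induct)
  case id
  have "lift_to_pairs L (\<lambda>k. k) = id" by (auto simp: lift_to_pairs_def fun_eq_iff)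
  then show ?case by (simp flip: id_def)
next
  case (swap a b \<pi>)
  then have ab: "a < L" "b < L" by auto
  let ?t = "transpose (2*a) (2*b) \<circ> transpose (2*a+1) (2*b+1)"
  have t: "?t permutes {0..<2*L}"
    using ab by (intro permutes_compose permutes_swap_id) auto
  have "sign ?t = 1"
    using \<open>a \<noteq> b\<close> by (simp add: sign_compose permutation_swap_id sign_swap_id)
  moreover have "sign (?t \<circ> lift_to_pairs L \<pi>) = sign ?t * sign (lift_to_pairs L \<pi>)"
    using swap.IH t by (intro sign_compose) (auto intro: permutes_imp_permutation)
  ultimately have "?t \<circ> lift_to_pairs L \<pi> permutes {0..<2*L} \<and> sign (?t \<circ> lift_to_pairs L \<pi>) = 1"
    using swap.IH permutes_compose[OF _ t, of "lift_to_pairs L \<pi>"] by simp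
  then show ?case
    unfolding lift_to_pairs_transpose[OF ab \<open>\<pi> permutes {0..<L}\<close>] .
qed

lemma swap_within_pairs_insert:
  assumes "i \<notin> S" "i < L"
  shows "swap_within_pairs L (insert i S) = transpose (2*i) (2*i+1) \<circ> swap_within_pairs L S"
proof
  fix k
  show "swap_within_pairs L (insert i S) k = (transpose (2*i) (2*i+1) \<circ> swap_within_pairs L S) k"
  proof (cases "k < 2*L")
    case True
    obtain j r where k: "k = 2*j + r" and r: "r < 2" by (rule split_pair_index)
    with True have "j < L" by simp
    then show ?thesis
      unfolding k o_apply swap_within_pairs_apply[OF r \<open>j < L\<close>]
      using assms r unfolding less_2_cases_iff by (auto simp: transpose_def) presburger
  next
    case False
    then show ?thesis using assms by (auto simp: swap_within_pairs_def transpose_def)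
  qed
qed

lemma swap_within_pairs_permutes_sign:
  assumes "finite S" "S \<subseteq> {0..<L}"
  shows "swap_within_pairs L S permutes {0..<2*L} \<and> sign (swap_within_pairs L S) = (-1) ^ card S"
  using assms
proof (induction rule: finite_induct)
  case empty
  have "swap_within_pairs L {} = id" by (auto simp: swap_within_pairs_def fun_eq_iff)
  then show ?case by (simp flip: id_def)
next
  case (insert i S)
  then have "i < L" by auto
  have t: "transpose (2*i) (2*i+1) permutes {0..<2*L}"
    using \<open>i < L\<close> by (intro permutes_swap_id) auto
  from insert have IH: "swap_within_pairs L S permutes {0..<2*L}"
      "sign (swap_within_pairs L S) = (-1) ^ card S" by auto
  have "sign (transpose (2*i) (2*i+1) \<circ> swap_within_pairs L S) = - sign (swap_within_pairs L S)"
    unfolding sign_compose[OF permutation_swap_id permutes_imp_permutation[OF finite_atLeastLessThan IH(1)]]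
    by (simp add: sign_swap_id)
  then show ?case
    unfolding swap_within_pairs_insert[OF insert(2) \<open>i < L\<close>]
    using IH(2) insert(1,2) permutes_compose[OF IH(1) t] by (simp del: comp_apply)
qed

lemma block_map_permutes:
  fixes \<sigma> \<pi> :: "nat \<Rightarrow> nat"
  assumes \<sigma>: "\<sigma> permutes {0..<2*L}"
    and block: "\<And>i r. i < L \<Longrightarrow> r < 2 \<Longrightarrow> \<sigma> (2*i + r) = 2 * \<pi> i + (if i \<in> S then 1 - r else r)"
  shows "(\<lambda>i. if i < L then \<pi> i else i) permutes {0..<L}"
proof (rule permutes_extend_id)
  show "\<pi> ` {0..<L} \<subseteq> {0..<L}"
  proof (rule image_subsetI)
    fix i assume "i \<in> {0..<L}"
    then have "\<sigma> (2*i + 0) < 2*L" using \<sigma> by (auto dest: permutes_in_image)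
    then show "\<pi> i \<in> {0..<L}" using block[of i 0] \<open>i \<in> {0..<L}\<close> by auto
  qed
  show "inj_on \<pi> {0..<L}"
  proof (rule inj_onI)
    fix i j assume i: "i \<in> {0..<L}" and j: "j \<in> {0..<L}" and eq: "\<pi> i = \<pi> j"
    define s where "s = (if j \<in> S then 1 else 0 :: nat)"
    define r where "r = (if i \<in> S then 1 - s else s)"
    have "r < 2" unfolding r_def s_def by simp
    have "\<sigma> (2*i + r) = \<sigma> (2*j + 0)"
      using block[OF _ \<open>r < 2\<close>, of i] block[of j 0] i j eq unfolding r_def s_def by auto
    then have "2*i + r = 2*j"
      using permutes_inj[OF \<sigma>] by (auto dest: injD)
    with \<open>r < 2\<close> show "i = j" by presburger
  qed
qed

lemma sign_block_permutation:
  fixes \<sigma> \<pi> :: "nat \<Rightarrow> nat"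
  assumes \<sigma>: "\<sigma> permutes {0..<2*L}" and S: "S \<subseteq> {0..<L}"
    and block: "\<And>i r. i < L \<Longrightarrow> r < 2 \<Longrightarrow> \<sigma> (2*i + r) = 2 * \<pi> i + (if i \<in> S then 1 - r else r)"
  shows "sign \<sigma> = (-1) ^ card S"
proof -
  let ?\<pi> = "\<lambda>i. if i < L then \<pi> i else i"
  have "\<sigma> = lift_to_pairs L ?\<pi> \<circ> swap_within_pairs L S"
  proof
    fix k
    show "\<sigma> k = (lift_to_pairs L ?\<pi> \<circ> swap_within_pairs L S) k"
    proof (cases "k < 2*L")
      case True
      obtain i r where k: "k = 2*i + r" and r: "r < 2" by (rule split_pair_index)
      with True have "i < L" by simp
      have "(if i \<in> S then 1 - r else r) < 2" using r by (cases "i \<in> S") auto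
      with r show ?thesis
        unfolding k o_apply swap_within_pairs_apply[OF r \<open>i < L\<close>]
        by (simp add: lift_to_pairs_apply \<open>i < L\<close> block)
    next
      case False
      then show ?thesis
        using \<sigma> by (auto simp: lift_to_pairs_def swap_within_pairs_def permutes_def)
    qed
  qed
  moreover have "finite S" using S finite_subset by blast
  ultimately show ?thesis
    using lift_to_pairs_permutes_sign[OF block_map_permutes[OF \<sigma> block]] swap_within_pairs_permutes_sign[OF _ S]
    by (simp add: sign_compose permutes_imp_permutation[of "{0..<2*L}"])
qed

lemma std_symplectic_pairing_term:
  assumes \<sigma>: "\<sigma> permutes {0..<2*L}"
    and nz: "\<And>i. i < L \<Longrightarrow> std_symplectic (2*L) $$ (\<sigma> (2*i), \<sigma> (2*i+1)) \<noteq> 0"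
  shows "signof \<sigma> * (\<Prod>i<L. std_symplectic (2*L) $$ (\<sigma> (2*i), \<sigma> (2*i+1))) = 1"
proof -
  define S where "S = {i \<in> {0..<L}. odd (\<sigma> (2*i))}"
  define \<pi> where "\<pi> = (\<lambda>i. \<sigma> (2*i) div 2)"
  have S: "S \<subseteq> {0..<L}" unfolding S_def by auto
  have block: "\<sigma> (2*i + r) = 2 * \<pi> i + (if i \<in> S then 1 - r else r)" if "i < L" "r < 2" for i r
  proof -
    have "2*i < 2*L" "2*i + 1 < 2*L" using \<open>i < L\<close> by auto
    then have "(even (\<sigma> (2*i)) \<and> \<sigma> (2*i+1) = \<sigma> (2*i) + 1) \<or> (odd (\<sigma> (2*i)) \<and> \<sigma> (2*i) = \<sigma> (2*i+1) + 1)"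
      using nz[OF \<open>i < L\<close>] \<sigma> by (auto simp: index_std_symplectic split: if_splits dest: permutes_in_image)
    then show ?thesis
      using that unfolding less_2_cases_iff \<pi>_def S_def by (auto elim!: evenE oddE; presburger)
  qed
  have "(\<Prod>i<L. std_symplectic (2*L) $$ (\<sigma> (2*i), \<sigma> (2*i+1))) = (\<Prod>i<L. if i \<in> S then -1 else 1)"
  proof (rule prod.cong[OF refl])
    fix i assume "i \<in> {..<L}"
    then have "i < L" by simp
    then have "\<sigma> (2*i) < 2*L" using \<sigma> by (auto dest: permutes_in_image)
    then have "\<pi> i < L" unfolding \<pi>_def by simp
    then show "std_symplectic (2*L) $$ (\<sigma> (2*i), \<sigma> (2*i+1)) = (if i \<in> S then -1 else 1)"
      using block[OF \<open>i < L\<close>, of 0] block[OF \<open>i < L\<close>, of 1] by (auto simp: index_std_symplectic)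
  qed
  also have "\<dots> = (-1) ^ card S"
    using S by (simp add: prod.If_cases Int_absorb1 atLeast0LessThan)
  finally show ?thesis
    using sign_block_permutation[OF \<sigma> S block] by (simp flip: power_mult_distrib)
qed

lemma pfaffian_std_symplectic_pos: "pfaffian L (std_symplectic (2*L)) > 0"
proof -
  let ?P = "{\<sigma>. \<sigma> permutes {0..<2*L}}"
  let ?t = "\<lambda>\<sigma>. signof \<sigma> * (\<Prod>i<L. std_symplectic (2*L) $$ (\<sigma> (2*i), \<sigma> (2*i+1)))"
  have "?t \<sigma> \<ge> 0" if "\<sigma> \<in> ?P" for \<sigma>
  proof (cases "\<forall>i<L. std_symplectic (2*L) $$ (\<sigma> (2*i), \<sigma> (2*i+1)) \<noteq> 0")
    case True
    then show ?thesis using std_symplectic_pairing_term[of \<sigma> L] that by simp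
  next
    case False
    then have "(\<Prod>i<L. std_symplectic (2*L) $$ (\<sigma> (2*i), \<sigma> (2*i+1))) = 0"
      by (intro prod_zero) auto
    then show ?thesis by (simp only: mult_zero_right order_refl)
  qed
  moreover have "?t id = 1"
    by (simp add: index_std_symplectic)
  ultimately have "1 \<le> sum ?t ?P"
    using member_le_sum[of id ?P ?t] finite_permutations[of "{0..<2*L}"] by simp
  then show ?thesis unfolding pfaffian_def by simp
qed

subsection \<open>Congruence to the standard symplectic matrix\<close>

definition std_symplectic_rows :: "nat \<Rightarrow> nat \<Rightarrow> real mat \<Rightarrow> bool" where
  "std_symplectic_rows n k A \<longleftrightarrow> (\<forall>i<2*k. \<forall>j<n. A $$ (i, j) = std_symplectic n $$ (i, j))"

lemma std_symplectic_rows_col: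
  assumes "skew_symmetric_mat n A" "std_symplectic_rows n k A" "i < n" "j < 2*k" "2*k \<le> n"
  shows "A $$ (i, j) = std_symplectic n $$ (i, j)"
  using assms skew_symmetric_mat_index[OF assms(1), of j i]
    skew_symmetric_mat_index[OF std_symplectic_skew_symmetric, of j n i]
  unfolding std_symplectic_rows_def by simp

lemma det_zero_row:
  fixes A :: "'a::comm_ring_1 mat"
  assumes A: "A \<in> carrier_mat n n" and "p < n" and zero: "\<And>j. j < n \<Longrightarrow> A $$ (p, j) = 0"
  shows "det A = 0"
proof -
  have "multrow p 0 A = A"
    using A zero by (intro eq_matI) auto
  then show ?thesis
    using det_multrow[OF \<open>p < n\<close> A, of 0] by simp
qed

lemma std_symplectic_rows_pivot:
  assumes skew: "skew_symmetric_mat n A" and det: "det A \<noteq> 0"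
    and rows: "std_symplectic_rows n k A" and kn: "2*k + 2 \<le> n"
  obtains j where "2*k < j" "j < n" "A $$ (2*k, j) \<noteq> 0"
proof (rule ccontr)
  assume "\<not> thesis"
  with that have right: "A $$ (2*k, j) = 0" if "2*k < j" "j < n" for j
    using that by blast
  have "A $$ (2*k, j) = 0" if "j < n" for j
  proof -
    consider "j < 2*k" | "j = 2*k" | "2*k < j" by linarith
    then show ?thesis
    proof cases
      case 1
      then show ?thesis
        using std_symplectic_rows_col[OF skew rows, of "2*k" j] std_symplectic_off_block(2)[of j k "2*k" n] kn
        by simp
    qed (use skew_symmetric_mat_diag[OF skew] kn right \<open>j < n\<close> in auto)
  qed
  then have "det A = 0"
    using det_zero_row[OF skew_symmetric_mat_carrier[OF skew], of "2*k"] kn by simp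
  with det show False by simp
qed

lemma std_symplectic_rows_swap:
  assumes A: "A \<in> carrier_mat n n" and rows: "std_symplectic_rows n k A"
    and j: "2*k < j" "j < n" and kn: "2*k + 2 \<le> n"
  obtains B where "congruent_mat n A B" "std_symplectic_rows n k B"
    "B $$ (2*k, 2*k+1) = A $$ (2*k, j)"
proof -
  let ?\<tau> = "transpose (2*k+1) j"
  let ?S = "swaprows_mat n (2*k+1) j :: real mat"
  have \<tau>n: "?\<tau> i < n" if "i < n" for i
    using that j kn by (simp add: transpose_def)
  have B: "(?S * A * transpose_mat ?S) $$ (i, i') = A $$ (?\<tau> i, ?\<tau> i')" if "i < n" "i' < n" for i i'
  proof -
    have "(?S * A * transpose_mat ?S) $$ (i, i') = 1 * A $$ (?\<tau> i, ?\<tau> i') * 1"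
      by (rule congruence_index_monomial[OF A swaprows_mat_carrier _ \<tau>n that])
         (auto simp: transpose_def)
    then show ?thesis by simp
  qed
  have "std_symplectic_rows n k (?S * A * transpose_mat ?S)"
    unfolding std_symplectic_rows_def
  proof (intro allI impI)
    fix i i' assume "i < 2*k" "i' < n"
    then have "?\<tau> i = i" and "i < n" using j kn by (auto simp: transpose_def)
    moreover have "std_symplectic n $$ (i, ?\<tau> i') = std_symplectic n $$ (i, i')"
      using \<open>i < 2*k\<close> \<open>i' < n\<close> \<tau>n j kn
      by (cases "i' < 2*k") (auto simp: transpose_def std_symplectic_off_block(1)[of i k])
    ultimately show "(?S * A * transpose_mat ?S) $$ (i, i') = std_symplectic n $$ (i, i')"
      using rows \<tau>n[OF \<open>i' < n\<close>] B[OF \<open>i < n\<close> \<open>i' < n\<close>] \<open>i < 2*k\<close>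
      unfolding std_symplectic_rows_def by simp
  qed
  moreover have "(?S * A * transpose_mat ?S) $$ (2*k, 2*k+1) = A $$ (2*k, j)"
    using B[of "2*k" "2*k+1"] j kn by (simp add: transpose_def)
  moreover have "det ?S \<noteq> 0"
  proof (cases "j = 2*k+1")
    case True
    then have "?S = 1\<^sub>m n" by (intro eq_matI) auto
    then show ?thesis by simp
  next
    case False
    then show ?thesis using j kn by (simp add: det_swaprows_mat)
  qed
  then have "congruent_mat n A (?S * A * transpose_mat ?S)"
    by (intro congruent_matI) auto
  ultimately show ?thesis using that by blast
qed

lemma std_symplectic_rows_scale:
  assumes A: "A \<in> carrier_mat n n" and rows: "std_symplectic_rows n k A"
    and c: "A $$ (2*k, 2*k+1) \<noteq> 0" and kn: "2*k + 2 \<le> n"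
  obtains B where "congruent_mat n A B" "std_symplectic_rows n k B" "B $$ (2*k, 2*k+1) = 1"
proof -
  let ?c = "A $$ (2*k, 2*k+1)"
  let ?D = "multrow_mat n (2*k) (1 / ?c)"
  let ?d = "\<lambda>i. if i = 2*k then 1 / ?c else 1"
  have B: "(?D * A * transpose_mat ?D) $$ (i, i') = ?d i * A $$ (i, i') * ?d i'" if "i < n" "i' < n" for i i'
    by (rule congruence_index_monomial[OF A multrow_mat_carrier _ _ that]) auto
  have "std_symplectic_rows n k (?D * A * transpose_mat ?D)"
    unfolding std_symplectic_rows_def
  proof (intro allI impI)
    fix i i' assume "i < 2*k" "i' < n"
    moreover have "std_symplectic n $$ (i, 2*k) = 0"
      using \<open>i < 2*k\<close> kn by (intro std_symplectic_off_block(1)) auto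
    ultimately show "(?D * A * transpose_mat ?D) $$ (i, i') = std_symplectic n $$ (i, i')"
      using rows B[of i i'] kn unfolding std_symplectic_rows_def by auto
  qed
  moreover have "(?D * A * transpose_mat ?D) $$ (2*k, 2*k+1) = 1"
    using B[of "2*k" "2*k+1"] c kn by simp
  moreover have "congruent_mat n A (?D * A * transpose_mat ?D)"
    using c kn by (intro congruent_matI) (auto simp: det_multrow_mat)
  ultimately show ?thesis using that by blast
qed

text \<open>If \<open>A\<close> is skew-symmetric with \<open>A(p, p+1) = 1\<close>, congruence by this matrix makes the entries
  of rows and columns \<open>p\<close>, \<open>p+1\<close> vanish beyond index \<open>p+1\<close>.\<close>
definition pair_elimination_mat :: "nat \<Rightarrow> nat \<Rightarrow> real mat \<Rightarrow> real mat" where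
  "pair_elimination_mat n p A = mat n n (\<lambda>(i, j). (if i = j then 1 else 0) +
     (if p + 2 \<le> i then (if j = p then - A $$ (i, p+1) else if j = p+1 then A $$ (i, p) else 0) else 0))"

lemma pair_elimination_mat_carrier: "pair_elimination_mat n p A \<in> carrier_mat n n"
  unfolding pair_elimination_mat_def by simp

lemma det_pair_elimination_mat: "det (pair_elimination_mat n p A) = 1"
proof -
  have "det (pair_elimination_mat n p A) = prod_list (diag_mat (pair_elimination_mat n p A))"
    by (rule det_lower_triangular[of n]) (auto simp: pair_elimination_mat_def)
  also have "\<dots> = 1"
    by (auto simp: prod_list_diag_prod pair_elimination_mat_def intro!: prod.neutral)
  finally show ?thesis .
qed

lemma pair_elimination_index:
  assumes A: "A \<in> carrier_mat n n" and pn: "p + 2 \<le> n" and i: "i < p + 2" and j: "j < n"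
  shows "(pair_elimination_mat n p A * A * transpose_mat (pair_elimination_mat n p A)) $$ (i, j) =
    A $$ (i, j) + (if p + 2 \<le> j then - A $$ (j, p+1) * A $$ (i, p) + A $$ (j, p) * A $$ (i, p+1) else 0)"
proof -
  let ?E = "pair_elimination_mat n p A"
  have "i < n" using i pn by simp
  define c1 where "c1 = (if p + 2 \<le> j then - A $$ (j, p+1) else 0)"
  define c2 where "c2 = (if p + 2 \<le> j then A $$ (j, p) else 0)"
  have Ej: "?E $$ (j, b) = (if b = j then 1 else 0) + (if b = p then c1 else 0) + (if b = p+1 then c2 else 0)"
    if "b < n" for b
    using j that unfolding pair_elimination_mat_def c1_def c2_def by auto
  have "(?E * A * transpose_mat ?E) $$ (i, j) = (\<Sum>a<n. \<Sum>b<n. ?E $$ (i, a) * A $$ (a, b) * ?E $$ (j, b))"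
    by (rule congruence_index[OF A pair_elimination_mat_carrier \<open>i < n\<close> j])
  also have "\<dots> = (\<Sum>a<n. if a = i then (\<Sum>b<n. A $$ (a, b) * ?E $$ (j, b)) else 0)"
    using i \<open>i < n\<close> by (intro sum.cong refl) (auto simp: pair_elimination_mat_def)
  also have "\<dots> = (\<Sum>b<n. (if b = j then A $$ (i, b) else 0) + (if b = p then A $$ (i, b) * c1 else 0)
      + (if b = p+1 then A $$ (i, b) * c2 else 0))"
    using \<open>i < n\<close> by (auto simp: Ej algebra_simps intro!: sum.cong)
  also have "\<dots> = A $$ (i, j) + A $$ (i, p) * c1 + A $$ (i, p+1) * c2"
    using j pn by (simp add: sum.distrib)
  finally show ?thesis unfolding c1_def c2_def by (auto simp: algebra_simps)
qed

lemma std_symplectic_rows_pivot_block: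
  assumes skew: "skew_symmetric_mat n A" and rows: "std_symplectic_rows n k A"
    and one: "A $$ (2*k, 2*k+1) = 1" and kn: "2*k + 2 \<le> n"
    and i: "2*k \<le> i" "i < 2*k + 2" and j: "j < 2*k + 2"
  shows "A $$ (i, j) = std_symplectic n $$ (i, j)"
proof (cases "j < 2*k")
  case True
  then show ?thesis
    using std_symplectic_rows_col[OF skew rows, of i j] i kn by simp
next
  case False
  then have "i \<in> {2*k, 2*k+1}" "j \<in> {2*k, 2*k+1}" using i j by auto
  moreover have "A $$ (2*k+1, 2*k) = -1"
    using skew_symmetric_mat_index[OF skew, of "2*k" "2*k+1"] one kn by simp
  ultimately show ?thesis
    using skew_symmetric_mat_diag[OF skew] one kn by (auto simp: index_std_symplectic)
qed

lemma std_symplectic_rows_eliminate: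
  assumes skew: "skew_symmetric_mat n A" and rows: "std_symplectic_rows n k A"
    and one: "A $$ (2*k, 2*k+1) = 1" and kn: "2*k + 2 \<le> n"
  obtains B where "congruent_mat n A B" "std_symplectic_rows n (k+1) B"
proof -
  define p where "p = 2*k"
  have A: "A \<in> carrier_mat n n" using skew_symmetric_mat_carrier[OF skew] .
  have pn: "p + 2 \<le> n" using kn p_def by simp
  let ?E = "pair_elimination_mat n p A"
  let ?B = "?E * A * transpose_mat ?E"
  note block = std_symplectic_rows_pivot_block[OF skew rows one kn, folded p_def]
  have "std_symplectic_rows n (k+1) ?B"
    unfolding std_symplectic_rows_def
  proof (intro allI impI)
    fix i j assume "i < 2*(k+1)" "j < n"
    then have i: "i < p + 2" using p_def by simp
    note B = pair_elimination_index[OF A pn i \<open>j < n\<close>]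
    show "?B $$ (i, j) = std_symplectic n $$ (i, j)"
    proof (cases "i < p")
      case True
      have "A $$ (i, p) = 0" "A $$ (i, p+1) = 0"
        using rows True pn p_def std_symplectic_off_block(1)[of i k _ n]
        unfolding std_symplectic_rows_def by auto
      then show ?thesis using B rows True p_def \<open>j < n\<close>
        unfolding std_symplectic_rows_def by simp
    next
      case False
      show ?thesis
      proof (cases "j < p + 2")
        case True
        then show ?thesis using B block[OF _ i True] False by simp
      next
        case far: False
        have "std_symplectic n $$ (i, j) = 0"
          using std_symplectic_off_block(1)[of i "k+1" j n] i far \<open>j < n\<close> p_def by simp
        moreover have "i = p \<or> i = p + 1" using i False by auto
        ultimately show ?thesis
          using B block[of p p] block[of p "p+1"] block[of "p+1" p] block[of "p+1" "p+1"]
            skew_symmetric_mat_index[OF skew, of i j] far pn \<open>j < n\<close> p_def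
          by (auto simp: index_std_symplectic)
      qed
    qed
  qed
  moreover have "congruent_mat n A ?B"
    by (intro congruent_matI pair_elimination_mat_carrier) (simp add: det_pair_elimination_mat)
  ultimately show ?thesis using that by blast
qed

lemma std_symplectic_rows_step:
  assumes skew: "skew_symmetric_mat n A" and det: "det A \<noteq> 0"
    and rows: "std_symplectic_rows n k A" and kn: "2*k + 2 \<le> n"
  obtains B where "congruent_mat n A B" "std_symplectic_rows n (k+1) B"
proof -
  have A: "A \<in> carrier_mat n n" using skew_symmetric_mat_carrier[OF skew] .
  obtain j where j: "2*k < j" "j < n" "A $$ (2*k, j) \<noteq> 0"
    using std_symplectic_rows_pivot[OF skew det rows kn] .
  obtain B1 where AB1: "congruent_mat n A B1" and rows1: "std_symplectic_rows n k B1"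
    and pivot: "B1 $$ (2*k, 2*k+1) \<noteq> 0"
    using std_symplectic_rows_swap[OF A rows j(1,2) kn] j(3) by metis
  have B1: "B1 \<in> carrier_mat n n" using congruent_mat_carrier[OF A AB1] .
  obtain B2 where B1B2: "congruent_mat n B1 B2" and rows2: "std_symplectic_rows n k B2"
    and one: "B2 $$ (2*k, 2*k+1) = 1"
    using std_symplectic_rows_scale[OF B1 rows1 pivot kn] .
  have AB2: "congruent_mat n A B2" using congruent_mat_trans[OF A AB1 B1B2] .
  obtain B3 where "congruent_mat n B2 B3" "std_symplectic_rows n (k+1) B3"
    using std_symplectic_rows_eliminate[OF congruent_mat_skew_symmetric[OF skew AB2] rows2 one kn] .
  with that show ?thesis using congruent_mat_trans[OF A AB2] by blast
qed

lemma congruent_std_symplectic: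
  assumes skew: "skew_symmetric_mat (2*L) A" and det: "det A \<noteq> 0"
  shows "congruent_mat (2*L) A (std_symplectic (2*L))"
proof -
  have "\<forall>A. skew_symmetric_mat (2*L) A \<longrightarrow> det A \<noteq> 0 \<longrightarrow> std_symplectic_rows (2*L) k A \<longrightarrow>
      congruent_mat (2*L) A (std_symplectic (2*L))" if "k \<le> L" for k
    using that
  proof (induction k rule: inc_induct)
    case base
    show ?case
    proof (intro allI impI)
      fix A assume skew: "skew_symmetric_mat (2*L) A" and rows: "std_symplectic_rows (2*L) L A"
      have A: "A \<in> carrier_mat (2*L) (2*L)" using skew_symmetric_mat_carrier[OF skew] .
      then have "A = std_symplectic (2*L)"
        using rows unfolding std_symplectic_rows_def by (intro eq_matI) (auto simp: index_std_symplectic)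
      then show "congruent_mat (2*L) A (std_symplectic (2*L))"
        using congruent_mat_refl[OF A] by simp
    qed
  next
    case (step k)
    show ?case
    proof (intro allI impI)
      fix A assume skew: "skew_symmetric_mat (2*L) A" and det: "det A \<noteq> 0"
        and rows: "std_symplectic_rows (2*L) k A"
      have A: "A \<in> carrier_mat (2*L) (2*L)" using skew_symmetric_mat_carrier[OF skew] .
      obtain B where AB: "congruent_mat (2*L) A B" and rows': "std_symplectic_rows (2*L) (k+1) B"
        using std_symplectic_rows_step[OF skew det rows] step.hyps(2) by auto
      have "congruent_mat (2*L) B (std_symplectic (2*L))"
        using step.IH congruent_mat_skew_symmetric[OF skew AB] congruent_mat_det[OF A AB det] rows'
        by simp
      then show "congruent_mat (2*L) A (std_symplectic (2*L))"
        using congruent_mat_trans[OF A AB] by blast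
    qed
  qed
  moreover have "std_symplectic_rows (2*L) 0 A" by (simp add: std_symplectic_rows_def)
  ultimately show ?thesis using skew det by blast
qed

lemma pfaffian_nonzero:
  assumes "skew_symmetric_mat (2*L) A" "det A \<noteq> 0"
  shows "pfaffian L A \<noteq> 0"
proof -
  obtain N where N: "N \<in> carrier_mat (2*L) (2*L)" and J: "std_symplectic (2*L) = N * A * transpose_mat N"
    using congruent_std_symplectic[OF assms] by (elim congruent_matE)
  have "pfaffian L (std_symplectic (2*L)) = det N * pfaffian L A"
    unfolding J using pfaffian_congruence[OF skew_symmetric_mat_carrier[OF assms(1)] N] .
  then show ?thesis using pfaffian_std_symplectic_pos[of L] by auto
qed

lemma spectral_flow2_congruent:
  assumes "congruent_mat n A0 A1"
  obtains M where "M \<in> carrier_mat n n" "A1 = M * A0 * transpose_mat M"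
    "spectral_flow2 n A0 A1 = sgn (det M)"
proof -
  let ?M = "SOME M. M \<in> carrier_mat n n \<and> invertible_mat M \<and> A1 = M * A0 * transpose_mat M"
  have "\<exists>M. M \<in> carrier_mat n n \<and> invertible_mat M \<and> A1 = M * A0 * transpose_mat M"
    using assms unfolding congruent_mat_def by blast
  from someI_ex[OF this] have "?M \<in> carrier_mat n n" "A1 = ?M * A0 * transpose_mat ?M" by blast+
  moreover have "spectral_flow2 n A0 A1 = sgn (det ?M)" unfolding spectral_flow2_def ..
  ultimately show ?thesis using that by blast
qed

theorem proposition3p3:
  fixes L :: nat and A0 A1 :: "real mat"
  assumes "skew_symmetric_mat (2*L) A0" and "skew_symmetric_mat (2*L) A1"
    and "invertible_mat A0" and "invertible_mat A1"
  shows "kitaev_index L A0 = kitaev_index L A1 \<longleftrightarrow> spectral_flow2 (2*L) A0 A1 = 1"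
proof -
  have A0: "A0 \<in> carrier_mat (2*L) (2*L)" and A1: "A1 \<in> carrier_mat (2*L) (2*L)"
    using assms(1,2) by (simp_all add: skew_symmetric_mat_carrier)
  have det0: "det A0 \<noteq> 0" and det1: "det A1 \<noteq> 0"
    using assms(3,4) A0 A1 by (simp_all add: invertible_mat_iff_det)
  have "congruent_mat (2*L) A0 A1"
    using congruent_mat_trans[OF A0 congruent_std_symplectic[OF assms(1) det0]
        congruent_mat_sym[OF A1 congruent_std_symplectic[OF assms(2) det1]]] .
  then obtain M where M: "M \<in> carrier_mat (2*L) (2*L)" "A1 = M * A0 * transpose_mat M"
    and sf: "spectral_flow2 (2*L) A0 A1 = sgn (det M)"
    by (rule spectral_flow2_congruent)
  have "kitaev_index L A1 = sgn (det M) * kitaev_index L A0"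
    unfolding kitaev_index_def M(2) pfaffian_congruence[OF A0 M(1)] by (rule sgn_mult)
  moreover have "kitaev_index L A0 \<noteq> 0"
    using pfaffian_nonzero[OF assms(1) det0] by (simp add: kitaev_index_def sgn_zero_iff)
  ultimately show ?thesis
    unfolding sf by auto
qed

end
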